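(* Let $a\in\mathbb{R}^{p+1}$ (i.e. $a=\sum_{s=0}^pa_sv_s$ with $a_s\in\mathbb{R}$) and $\underline{\omega}\in\mathbb{S}$. Then for every $b\in\mathbb{A}$, $$a(\underline{\omega}b)=\underline{\omega}(a^cb).$$
   Context: Let $\mathbb{A}$ be a real alternative algebra (the associator $[a,b,c]=(ab)c-a(bc)$ is an alternating trilinear function) with unity $1$, of finite real dimension $d>1$, equipped with an anti-involution $a\mapsto a^c$ (real linear, $a^c=a$ for real $a$, $(a^c)^c=a$, $(ab)^c=b^ca^c$). Let $t(x)=x+x^c$, $n(x)=xx^c$, $\mathbb{S}_{\mathbb{A}}=\{x: t(x)=0,\ n(x)=1\}$ (assumed nonempty) and $Q_{\mathbb{A}}=\mathbb{R}\cup\{x: t(x)\in\mathbb{R},\ n(x)\in\mathbb{R},\ 4n(x)>t(x)^2\}$. Let $M$ be a real subspace with $\mathbb{R}\subsetneq M\subseteq Q_{\mathbb{A}}$ having a basis $(v_0,\dots,v_m)$, $m\ge1$, $v_0=1$, $v_s\in\mathbb{S}_{\mathbb{A}}$, $v_sv_t=-v_tv_s$ for distinct $s,t\ge1$. Fix $p\in\{0,\dots,m-1\}$; $\mathbb{R}^{p+1}$ denotes the span of $v_0,\dots,v_p$ and $\mathbb{S}=\{\sum_{s=p+1}^mx_sv_s: x_s\in\mathbb{R},\ \sum_{s=p+1}^m x_s^2=1\}$. *)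

theory Defs
  imports "HOL-Analysis.Analysis"
begin

text \<open>A real algebra is modelled as a real vector space 'a together with a
bilinear multiplication mul and a unit element one. The real numbers are
identified with the line spanned by one.\<close>

definition assoc :: "('a::real_vector \<Rightarrow> 'a \<Rightarrow> 'a) \<Rightarrow> 'a \<Rightarrow> 'a \<Rightarrow> 'a \<Rightarrow> 'a" where
  "assoc mul a b c = mul (mul a b) c - mul a (mul b c)"

definition is_real :: "'a::real_vector \<Rightarrow> 'a \<Rightarrow> bool" where
  "is_real one x \<longleftrightarrow> (\<exists>r::real. x = r *\<^sub>R one)"

definition alt_algebra :: "('a::real_vector \<Rightarrow> 'a \<Rightarrow> 'a) \<Rightarrow> 'a \<Rightarrow> bool" where
  "alt_algebra mul one \<longleftrightarrow>
     bilinear mul \<and>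
     (\<forall>x. mul one x = x \<and> mul x one = x) \<and>
     (\<forall>x y. assoc mul x x y = 0 \<and> assoc mul x y x = 0 \<and> assoc mul y x x = 0) \<and>
     (\<exists>B :: 'a set. finite B \<and> independent B \<and> span B = UNIV \<and> card B > 1)"

definition anti_involution :: "('a::real_vector \<Rightarrow> 'a \<Rightarrow> 'a) \<Rightarrow> 'a \<Rightarrow> ('a \<Rightarrow> 'a) \<Rightarrow> bool" where
  "anti_involution mul one cj \<longleftrightarrow>
     linear cj \<and>
     (\<forall>r::real. cj (r *\<^sub>R one) = r *\<^sub>R one) \<and>
     (\<forall>x. cj (cj x) = x) \<and>
     (\<forall>a b. cj (mul a b) = mul (cj b) (cj a))"

definition trace_A :: "('a::real_vector \<Rightarrow> 'a) \<Rightarrow> 'a \<Rightarrow> 'a" where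
  "trace_A cj x = x + cj x"

definition norm_A :: "('a::real_vector \<Rightarrow> 'a \<Rightarrow> 'a) \<Rightarrow> ('a \<Rightarrow> 'a) \<Rightarrow> 'a \<Rightarrow> 'a" where
  "norm_A mul cj x = mul x (cj x)"

definition sphere_A :: "('a::real_vector \<Rightarrow> 'a \<Rightarrow> 'a) \<Rightarrow> 'a \<Rightarrow> ('a \<Rightarrow> 'a) \<Rightarrow> 'a set" where
  "sphere_A mul one cj = {x. trace_A cj x = 0 \<and> norm_A mul cj x = one}"

definition quadratic_cone :: "('a::real_vector \<Rightarrow> 'a \<Rightarrow> 'a) \<Rightarrow> 'a \<Rightarrow> ('a \<Rightarrow> 'a) \<Rightarrow> 'a set" where
  "quadratic_cone mul one cj =
     {x. is_real one x} \<union>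
     {x. \<exists>t n :: real. trace_A cj x = t *\<^sub>R one \<and> norm_A mul cj x = n *\<^sub>R one \<and> 4 * n > t ^ 2}"

end

theory Submission
  imports Defs
begin

text \<open>Each \<open>v\<^sub>s\<close> with \<open>1 \<le> s \<le> p\<close> anticommutes with \<open>\<omega>\<close>, so left alternativity in its
polarized form \<open>x(yc) + y(xc) = (xy + yx)c\<close> gives \<open>v\<^sub>s(\<omega>b) = -\<omega>(v\<^sub>sb) = \<omega>(v\<^sub>s\<^sup>cb)\<close>;
for \<open>v\<^sub>0 = 1\<close> the identity is trivial. The elements \<open>a\<close> satisfying it for all \<open>b\<close> form a
subspace, hence it holds on the span of \<open>v\<^sub>0, \<dots>, v\<^sub>p\<close>.\<close>

lemma alt_algebraD:
  assumes "alt_algebra mul one"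
  shows "bilinear mul" "mul one x = x" "assoc mul x x y = 0"
  using assms unfolding alt_algebra_def by auto

lemma anti_involutionD:
  assumes "anti_involution mul one cj"
  shows "linear cj" "cj one = one"
  using assms unfolding anti_involution_def by (auto dest: spec[of _ 1])

lemma sphere_A_conj_eq_neg: "x \<in> sphere_A mul one cj \<Longrightarrow> cj x = - x"
  unfolding sphere_A_def trace_A_def by (simp add: add_eq_0_iff)

lemma left_alternative_polarized:
  assumes bil: "bilinear mul" and alt: "\<And>x y. assoc mul x x y = 0"
  shows "mul x (mul y c) + mul y (mul x c) = mul (mul x y + mul y x) c"
proof -
  have "assoc mul (x + y) (x + y) c - assoc mul x x c - assoc mul y y c = 0"
    by (simp add: alt)
  then show ?thesis
    by (simp add: assoc_def bilinear_ladd[OF bil] bilinear_radd[OF bil] algebra_simps)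
qed

lemma anticommuting_left_mult:
  assumes bil: "bilinear mul" and alt: "\<And>x y. assoc mul x x y = 0"
    and anti: "mul x y = - mul y x"
  shows "mul x (mul y c) = - mul y (mul x c)"
  using left_alternative_polarized[OF bil alt, of x y c]
  by (simp add: anti bilinear_lzero[OF bil] add_eq_0_iff)

lemma subspace_sum_scaleR:
  "subspace S \<Longrightarrow> (\<And>i. i \<in> A \<Longrightarrow> f i \<in> S) \<Longrightarrow> (\<Sum>i\<in>A. c i *\<^sub>R f i) \<in> S"
  by (rule subspace_sum, assumption, rule subspace_scale) auto

lemma subspace_anticommutant:
  assumes bil: "bilinear mul"
  shows "subspace {y. mul x y = - mul y x}"
  unfolding subspace_def
  by (simp add: bilinear_lzero[OF bil] bilinear_rzero[OF bil] bilinear_ladd[OF bil]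
      bilinear_radd[OF bil] bilinear_lmul[OF bil] bilinear_rmul[OF bil])

lemma subspace_conj_twisting:
  assumes bil: "bilinear mul" and "linear cj"
  shows "subspace {a. mul a (mul w b) = mul w (mul (cj a) b)}"
proof -
  interpret cj: linear cj by fact
  show ?thesis
    unfolding subspace_def
    by (simp add: cj.zero cj.add cj.scale bilinear_lzero[OF bil] bilinear_rzero[OF bil]
        bilinear_ladd[OF bil] bilinear_radd[OF bil] bilinear_lmul[OF bil] bilinear_rmul[OF bil])
qed

theorem lemma3p2:
  fixes mul :: "'a::real_vector \<Rightarrow> 'a \<Rightarrow> 'a"
    and one :: 'a and cj :: "'a \<Rightarrow> 'a"
    and v :: "nat \<Rightarrow> 'a" and m p :: nat
    and as xs :: "nat \<Rightarrow> real" and b :: 'a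
  assumes alg: "alt_algebra mul one"
    and inv: "anti_involution mul one cj"
    and S_ne: "sphere_A mul one cj \<noteq> {}"
    and m: "1 \<le> m"
    and v0: "v 0 = one"
    and vS: "\<And>s. 1 \<le> s \<Longrightarrow> s \<le> m \<Longrightarrow> v s \<in> sphere_A mul one cj"
    and vanti: "\<And>s t. 1 \<le> s \<Longrightarrow> s \<le> m \<Longrightarrow> 1 \<le> t \<Longrightarrow> t \<le> m \<Longrightarrow> s \<noteq> t \<Longrightarrow>
                  mul (v s) (v t) = - mul (v t) (v s)"
    and vinj: "inj_on v {0..m}"
    and vind: "independent (v ` {0..m})"
    and MQ: "span (v ` {0..m}) \<subseteq> quadratic_cone mul one cj"
    and p: "p < m"
    and xs: "(\<Sum>s=p+1..m. (xs s)\<^sup>2) = 1"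
  shows "mul (\<Sum>s=0..p. as s *\<^sub>R v s) (mul (\<Sum>s=p+1..m. xs s *\<^sub>R v s) b)
       = mul (\<Sum>s=p+1..m. xs s *\<^sub>R v s) (mul (cj (\<Sum>s=0..p. as s *\<^sub>R v s)) b)"
proof -
  define w where "w = (\<Sum>t=p+1..m. xs t *\<^sub>R v t)"
  note bil = alt_algebraD(1)[OF alg] and alt = alt_algebraD(3)[OF alg]
  have twists: "mul (v s) (mul w b) = mul w (mul (cj (v s)) b)" if "s \<le> p" for s
  proof (cases "s = 0")
    case True
    then show ?thesis by (simp add: v0 anti_involutionD(2)[OF inv] alt_algebraD(2)[OF alg])
  next
    case False
    have "mul (v s) (v t) = - mul (v t) (v s)" if "t \<in> {p+1..m}" for t
      using False \<open>s \<le> p\<close> p that by (intro vanti) auto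
    then have "w \<in> {y. mul (v s) y = - mul y (v s)}"
      unfolding w_def by (intro subspace_sum_scaleR subspace_anticommutant[OF bil]) simp
    then have "mul (v s) (mul w b) = - mul w (mul (v s) b)"
      by (intro anticommuting_left_mult[OF bil alt]) simp
    moreover have "cj (v s) = - v s"
      using False \<open>s \<le> p\<close> p by (intro sphere_A_conj_eq_neg[of _ mul one] vS) auto
    ultimately show ?thesis by (simp add: bilinear_lneg[OF bil] bilinear_rneg[OF bil])
  qed
  have "(\<Sum>s=0..p. as s *\<^sub>R v s) \<in> {a. mul a (mul w b) = mul w (mul (cj a) b)}"
    using twists
    by (intro subspace_sum_scaleR subspace_conj_twisting[OF bil anti_involutionD(1)[OF inv]]) simp
  then show ?thesis unfolding w_def by simp
qed

end
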